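(* Let $H\in M_d$ be a Hamiltonian, $\beta>0$, $\epsilon>0$, and let $\{e_1,\dots,e_{d'}\}\subset\mathbb R$ be an $\epsilon$-spectral covering of $H$. For $i\in[d']$ let $\tilde P_i$ be the orthogonal projection onto the span of the eigenvectors of $H$ with eigenvalues in $(e_i-\epsilon,e_i+\epsilon)$, and let $n_i=\operatorname{tr}\tilde P_i$. Define $$\tilde{\mathcal Z}_\beta=\sum_{i=1}^{d'}n_i e^{-\beta e_i},\qquad \tilde\rho=\frac{1}{\tilde{\mathcal Z}_\beta}\sum_{i=1}^{d'}e^{-\beta e_i}\tilde P_i .$$ Then $$\Big\|\tilde\rho-\frac{e^{-\beta H}}{\mathcal Z_\beta}\Big\|_1\le\sqrt{4\epsilon\beta}.$$ Consequently, for any POVM $\{F_k\}_{k\in I}$, the distributions $p(k)=\operatorname{tr}(F_k e^{-\beta H}/\mathcal Z_\beta)$ and $\tilde p(k)=\operatorname{tr}(F_k\tilde\rho)$ satisfy $\|\tilde p-p\|_1=\sum_k|\tilde p(k)-p(k)|\le\sqrt{4\epsilon\beta}$.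
   Context: $\mathcal Z_\beta=\operatorname{tr}[e^{-\beta H}]$. For $\epsilon>0$, a set $\{e_1,\dots,e_{d'}\}\subset\mathbb R$ is an $\epsilon$-spectral covering of a Hamiltonian (Hermitian matrix) $H$ if the spectrum $\sigma(H)$ is contained in the disjoint union $\bigsqcup_{i=1}^{d'}(e_i-\epsilon,e_i+\epsilon)$ (the intervals being pairwise disjoint) and $\sigma(H)\cap(e_i-\epsilon,e_i+\epsilon)\neq\emptyset$ for each $i$. $\|X\|_1=\operatorname{tr}|X|$ is the trace norm. A POVM is a family of positive semidefinite matrices $\{F_k\}_{k\in I}$ with $\sum_k F_k=\mathbf 1$. *)

theory Defs
  imports "HOL-Analysis.Analysis" "Jordan_Normal_Form.Matrix" "Jordan_Normal_Form.Char_Poly"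
begin

definition adj :: "complex mat \<Rightarrow> complex mat" where
  "adj A = mat (dim_col A) (dim_row A) (\<lambda>(i,j). cnj (A $$ (j,i)))"

definition hermitian :: "nat \<Rightarrow> complex mat \<Rightarrow> bool" where
  "hermitian d A \<longleftrightarrow> A \<in> carrier_mat d d \<and> adj A = A"

definition psd :: "nat \<Rightarrow> complex mat \<Rightarrow> bool" where
  "psd d A \<longleftrightarrow> hermitian d A \<and> (\<forall>v \<in> carrier_vec d. 0 \<le> Re ((A *\<^sub>v v) \<bullet>c v))"

definition tr :: "complex mat \<Rightarrow> complex" where
  "tr A = (\<Sum>i<dim_row A. A $$ (i,i))"

definition mat_exp :: "complex mat \<Rightarrow> complex mat" where
  "mat_exp A = mat (dim_row A) (dim_col A)
     (\<lambda>(i,j). \<Sum>k. (A ^\<^sub>m k) $$ (i,j) / of_nat (fact k))"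

definition spectrum :: "complex mat \<Rightarrow> complex set" where
  "spectrum A = {x. eigenvalue A x}"

definition vspan :: "nat \<Rightarrow> complex vec set \<Rightarrow> complex vec set" where
  "vspan d S = {v. \<exists>xs cs. set xs \<subseteq> S \<and> length cs = length xs \<and>
       v = foldr (+) (map2 (\<lambda>c x. c \<cdot>\<^sub>v x) cs xs) (0\<^sub>v d)}"

definition msum :: "nat \<Rightarrow> ('i \<Rightarrow> complex mat) \<Rightarrow> 'i set \<Rightarrow> complex mat" where
  "msum d f A = mat d d (\<lambda>(a,b). \<Sum>i\<in>A. f i $$ (a,b))"

definition orth_proj :: "nat \<Rightarrow> complex vec set \<Rightarrow> complex mat" where
  "orth_proj d W = (THE P. hermitian d P \<and> P * P = P \<and>
       (\<forall>v \<in> carrier_vec d. P *\<^sub>v v = v \<longleftrightarrow> v \<in> W))"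

definition mat_abs :: "complex mat \<Rightarrow> complex mat" where
  "mat_abs X = (THE S. psd (dim_col X) S \<and> S * S = adj X * X)"

definition trace_norm :: "complex mat \<Rightarrow> real" where
  "trace_norm X = Re (tr (mat_abs X))"

definition spectral_covering :: "real \<Rightarrow> complex mat \<Rightarrow> nat \<Rightarrow> (nat \<Rightarrow> real) \<Rightarrow> bool" where
  "spectral_covering \<epsilon> H d' e \<longleftrightarrow>
     spectrum H \<subseteq> (\<Union>i<d'. complex_of_real ` {e i - \<epsilon> <..< e i + \<epsilon>}) \<and>
     (\<forall>i<d'. \<forall>j<d'. i \<noteq> j \<longrightarrow> {e i - \<epsilon> <..< e i + \<epsilon>} \<inter> {e j - \<epsilon> <..< e j + \<epsilon>} = {}) \<and>
     (\<forall>i<d'. spectrum H \<inter> complex_of_real ` {e i - \<epsilon> <..< e i + \<epsilon>} \<noteq> {})"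

definition povm :: "nat \<Rightarrow> 'k set \<Rightarrow> ('k \<Rightarrow> complex mat) \<Rightarrow> bool" where
  "povm d I F \<longleftrightarrow> (\<forall>k\<in>I. psd d (F k)) \<and>
     (\<forall>i<d. \<forall>j<d. ((\<lambda>k. F k $$ (i,j)) has_sum (1\<^sub>m d $$ (i,j))) I)"

definition cov_proj :: "nat \<Rightarrow> complex mat \<Rightarrow> real \<Rightarrow> real \<Rightarrow> complex mat" where
  "cov_proj d H \<epsilon> c = orth_proj d (vspan d {v. \<exists>x\<in>{c - \<epsilon> <..< c + \<epsilon>}.
                                  eigenvector H v (complex_of_real x)})"

definition partition_fn :: "real \<Rightarrow> complex mat \<Rightarrow> complex" where
  "partition_fn \<beta> H = tr (mat_exp (complex_of_real (- \<beta>) \<cdot>\<^sub>m H))"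

definition gibbs :: "real \<Rightarrow> complex mat \<Rightarrow> complex mat" where
  "gibbs \<beta> H = (1 / partition_fn \<beta> H) \<cdot>\<^sub>m mat_exp (complex_of_real (- \<beta>) \<cdot>\<^sub>m H)"

definition approx_partition_fn :: "nat \<Rightarrow> complex mat \<Rightarrow> real \<Rightarrow> real \<Rightarrow> nat \<Rightarrow> (nat \<Rightarrow> real) \<Rightarrow> complex" where
  "approx_partition_fn d H \<beta> \<epsilon> d' e =
     (\<Sum>i<d'. tr (cov_proj d H \<epsilon> (e i)) * complex_of_real (exp (- \<beta> * e i)))"

definition approx_state :: "nat \<Rightarrow> complex mat \<Rightarrow> real \<Rightarrow> real \<Rightarrow> nat \<Rightarrow> (nat \<Rightarrow> real) \<Rightarrow> complex mat" where
  "approx_state d H \<beta> \<epsilon> d' e = (1 / approx_partition_fn d H \<beta> \<epsilon> d' e) \<cdot>\<^sub>m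
     msum d (\<lambda>i. complex_of_real (exp (- \<beta> * e i)) \<cdot>\<^sub>m cov_proj d H \<epsilon> (e i)) {..<d'}"

end

theory Submission
  imports Defs "Jordan_Normal_Form.Schur_Decomposition"
begin

text \<open>
  Write H = U diag(lam) U* with U unitary.  Every eigenvalue lam j lies in exactly one cell
  (e i - eps, e i + eps) of the covering, say in the cell of index iota j, so each covering
  projection is U diag(chi) U* for the indicator chi of its cell.  Hence the Gibbs state and the
  approximate state are diagonal in the same basis, with the Boltzmann weights of lam and of
  e o iota on the diagonal, and the trace norm of their difference is the l1 distance of these
  two weight vectors.  The same l1 distance bounds the difference of the outcome distributions
  of any POVM, because the numbers <u_j, F_k u_j> attached to the columns u_j of U are
  nonnegative and sum to 1 over k.  Finally |lam j - e (iota j)| < eps makes corresponding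
  unnormalised weights agree up to a factor exp (beta eps), which bounds the l1 distance by
  2 tanh (beta eps) <= sqrt (4 eps beta).
\<close>

section \<open>Unitary diagonalisation\<close>

lemma dim_adj [simp]: "dim_row (adj A) = dim_col A" "dim_col (adj A) = dim_row A"
  unfolding adj_def by simp_all

lemma adj_carrier_mat [simp]: "A \<in> carrier_mat r c \<Longrightarrow> adj A \<in> carrier_mat c r"
  unfolding carrier_mat_def by simp

lemma index_adj [simp]: "i < dim_col A \<Longrightarrow> j < dim_row A \<Longrightarrow> adj A $$ (i,j) = cnj (A $$ (j,i))"
  unfolding adj_def by simp

lemma adj_adj [simp]: "adj (adj A) = A"
  by (rule eq_matI) auto

lemma adj_mult:
  assumes "A \<in> carrier_mat r n" "B \<in> carrier_mat n c"
  shows "adj (A * B) = adj B * adj A"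
  by (rule eq_matI) (use assms in \<open>auto simp: scalar_prod_def mult.commute\<close>)

lemma mult_carrier_mat_square [simp]:
  "A \<in> carrier_mat n n \<Longrightarrow> B \<in> carrier_mat n n \<Longrightarrow> A * B \<in> carrier_mat n n"
  by (rule mult_carrier_mat)

definition unitary :: "nat \<Rightarrow> complex mat \<Rightarrow> bool" where
  "unitary n U \<longleftrightarrow> U \<in> carrier_mat n n \<and> adj U * U = 1\<^sub>m n \<and> U * adj U = 1\<^sub>m n"

lemma unitaryD:
  assumes "unitary n U"
  shows "U \<in> carrier_mat n n" "adj U * U = 1\<^sub>m n" "U * adj U = 1\<^sub>m n"
  using assms unfolding unitary_def by auto

lemma unitaryI: "U \<in> carrier_mat n n \<Longrightarrow> adj U * U = 1\<^sub>m n \<Longrightarrow> unitary n U"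
  using mat_mult_left_right_inverse[of "adj U" n U] unfolding unitary_def by auto

lemma adj_mult_eq_one_iff:
  assumes "U \<in> carrier_mat n n"
  shows "adj U * U = 1\<^sub>m n \<longleftrightarrow>
    (\<forall>i<n. \<forall>j<n. (\<Sum>l=0..<n. cnj (U $$ (l,i)) * U $$ (l,j)) = (if i = j then 1 else 0))"
  using assms by (auto simp: mat_eq_iff scalar_prod_def)

lemma unitary_mult_adj_cancel:
  assumes "unitary n U" "X \<in> carrier_mat n m"
  shows "U * (adj U * X) = X"
  using assms unitaryD[OF assms(1)] by (simp flip: assoc_mult_mat[of U n n "adj U" n X m])

lemma unitary_conj_cancel:
  assumes "unitary n U" "A \<in> carrier_mat n n"
  shows "U * (adj U * A * U) * adj U = A"
  using assms unitaryD[OF assms(1)]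
  by (simp add: assoc_mult_mat[of _ n n _ n _ n] unitary_mult_adj_cancel[OF assms(1), where m = n]
      right_mult_one_mat[of _ n n])

lemma unitary_col_inner:
  "unitary n U \<Longrightarrow> i < n \<Longrightarrow> j < n \<Longrightarrow>
    (\<Sum>l=0..<n. cnj (U $$ (l,i)) * U $$ (l,j)) = (if i = j then 1 else 0)"
  using adj_mult_eq_one_iff unitaryD by blast

lemma unitary_mult:
  assumes "unitary n U" "unitary n V"
  shows "unitary n (U * V)"
proof (rule unitaryI)
  have U: "U \<in> carrier_mat n n" "adj U * U = 1\<^sub>m n" and V: "V \<in> carrier_mat n n" "adj V * V = 1\<^sub>m n"
    using assms unitaryD by auto
  have "adj (U * V) * (U * V) = adj V * (adj U * U) * V"
    using U(1) V(1) by (simp add: adj_mult assoc_mult_mat[of _ n n _ n _ n])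
  then show "adj (U * V) * (U * V) = 1\<^sub>m n"
    using U V by simp
qed (use assms unitaryD in auto)

lemma unitary_col_nonzero:
  assumes "unitary n U" "j < n"
  shows "col U j \<noteq> 0\<^sub>v n"
proof
  assume z: "col U j = 0\<^sub>v n"
  have "U $$ (l,j) = 0" if "l < n" for l
    using arg_cong[OF z, of "\<lambda>v. v $ l"] that assms unitaryD(1)[OF assms(1)] by simp
  then show False
    using unitary_col_inner[OF assms(1,2,2)] by simp
qed

lemma dim_mat_diag [simp]: "dim_row (mat_diag n f) = n" "dim_col (mat_diag n f) = n"
  unfolding mat_diag_def by simp_all

lemma index_mat_diag [simp]: "i < n \<Longrightarrow> j < n \<Longrightarrow> mat_diag n f $$ (i,j) = (if i = j then f i else 0)"
  unfolding mat_diag_def by simp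

lemma index_mult_mat_diag:
  "A \<in> carrier_mat m n \<Longrightarrow> i < m \<Longrightarrow> j < n \<Longrightarrow> (A * mat_diag n f) $$ (i,j) = A $$ (i,j) * f j"
  by (simp add: mat_diag_mult_right)

lemma index_mat_diag_mult:
  "A \<in> carrier_mat n m \<Longrightarrow> i < n \<Longrightarrow> j < m \<Longrightarrow> (mat_diag n f * A) $$ (i,j) = f i * A $$ (i,j)"
  by (simp add: mat_diag_mult_left)

lemma index_mat_diag_mult_vec:
  assumes "w \<in> carrier_vec n" "i < n"
  shows "(mat_diag n f *\<^sub>v w) $ i = f i * w $ i"
proof -
  have "(mat_diag n f *\<^sub>v w) $ i = (\<Sum>l=0..<n. (if i = l then f i else 0) * w $ l)"
    using assms by (auto simp: scalar_prod_def mat_diag_def intro!: sum.cong)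
  also have "\<dots> = (\<Sum>l=0..<n. if l = i then f i * w $ i else 0)"
    by (rule sum.cong) auto
  finally show ?thesis
    using assms(2) by simp
qed

definition udiag :: "nat \<Rightarrow> complex mat \<Rightarrow> (nat \<Rightarrow> complex) \<Rightarrow> complex mat" where
  "udiag n U f = U * mat_diag n f * adj U"

lemma udiag_carrier [simp]:
  assumes "U \<in> carrier_mat n n"
  shows "udiag n U f \<in> carrier_mat n n" "dim_row (udiag n U f) = n" "dim_col (udiag n U f) = n"
  using assms unfolding udiag_def by auto

lemma index_udiag:
  assumes "U \<in> carrier_mat n n" "i < n" "j < n"
  shows "udiag n U f $$ (i,j) = (\<Sum>l=0..<n. U $$ (i,l) * f l * cnj (U $$ (j,l)))"
proof -
  have "udiag n U f $$ (i,j) = (\<Sum>l=0..<n. (U * mat_diag n f) $$ (i,l) * adj U $$ (l,j))"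
    using assms by (auto simp: udiag_def scalar_prod_def)
  then show ?thesis
    using assms by (simp add: index_mult_mat_diag del: index_mult_mat(1))
qed

lemma udiag_cong:
  assumes "U \<in> carrier_mat n n" "\<And>l. l < n \<Longrightarrow> f l = g l"
  shows "udiag n U f = udiag n U g"
  by (rule eq_matI) (use assms in \<open>auto simp: index_udiag\<close>)

lemma udiag_minus:
  assumes "U \<in> carrier_mat n n"
  shows "udiag n U f - udiag n U g = udiag n U (\<lambda>l. f l - g l)"
  by (rule eq_matI) (use assms in \<open>auto simp: index_udiag sum_subtractf[symmetric] algebra_simps\<close>)

lemma udiag_smult:
  assumes "U \<in> carrier_mat n n"
  shows "c \<cdot>\<^sub>m udiag n U f = udiag n U (\<lambda>l. c * f l)"
  by (rule eq_matI) (use assms in \<open>auto simp: index_udiag sum_distrib_left algebra_simps\<close>)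

lemma adj_udiag:
  assumes "U \<in> carrier_mat n n"
  shows "adj (udiag n U f) = udiag n U (\<lambda>l. cnj (f l))"
  by (rule eq_matI) (use assms in \<open>auto simp: index_udiag algebra_simps\<close>)

lemma udiag_mult:
  assumes "unitary n U"
  shows "udiag n U f * udiag n U g = udiag n U (\<lambda>l. f l * g l)"
proof -
  have U: "U \<in> carrier_mat n n" "adj U * U = 1\<^sub>m n"
    using assms unitaryD by auto
  have "udiag n U f * udiag n U g = U * mat_diag n f * (adj U * U) * mat_diag n g * adj U"
    unfolding udiag_def using U(1) by (simp add: assoc_mult_mat[of _ n n _ n _ n])
  also have "\<dots> = U * (mat_diag n f * mat_diag n g) * adj U"
    unfolding U using U(1) by (simp add: assoc_mult_mat[of _ n n _ n _ n] left_mult_one_mat[of _ n n])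
  finally show ?thesis
    unfolding udiag_def by simp
qed

lemma udiag_power:
  assumes "unitary n U"
  shows "udiag n U f ^\<^sub>m k = udiag n U (\<lambda>l. f l ^ k)"
proof (induction k)
  case 0
  then show ?case
    using unitaryD[OF assms] by (simp add: udiag_def)
next
  case (Suc k)
  then show ?case
    using udiag_mult[OF assms] by (simp add: mult.commute)
qed

lemma tr_udiag:
  assumes "unitary n U"
  shows "tr (udiag n U f) = (\<Sum>l=0..<n. f l)"
proof -
  have U: "U \<in> carrier_mat n n"
    using unitaryD[OF assms] by auto
  have "tr (udiag n U f) = (\<Sum>i<n. \<Sum>l=0..<n. U $$ (i,l) * f l * cnj (U $$ (i,l)))"
    unfolding tr_def using U by (auto simp: index_udiag intro!: sum.cong)
  also have "\<dots> = (\<Sum>l=0..<n. f l * (\<Sum>i=0..<n. cnj (U $$ (i,l)) * U $$ (i,l)))"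
    by (subst sum.swap) (auto simp: sum_distrib_left lessThan_atLeast0 intro!: sum.cong)
  finally show ?thesis
    using unitary_col_inner[OF assms] by simp
qed

lemma mat_exp_udiag:
  assumes "unitary n U"
  shows "mat_exp (udiag n U f) = udiag n U (\<lambda>l. exp (f l))"
proof (rule eq_matI)
  have U: "U \<in> carrier_mat n n"
    using unitaryD[OF assms] by auto
  fix i j assume "i < dim_row (udiag n U (\<lambda>l. exp (f l)))" "j < dim_col (udiag n U (\<lambda>l. exp (f l)))"
  then have i: "i < n" and j: "j < n"
    using U by auto
  have "(udiag n U f ^\<^sub>m k) $$ (i,j) / of_nat (fact k)
      = (\<Sum>l=0..<n. (U $$ (i,l) * cnj (U $$ (j,l))) * (f l ^ k /\<^sub>R fact k))" for k
    unfolding udiag_power[OF assms] using U i j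
    by (simp add: index_udiag sum_divide_distrib sum_distrib_left scaleR_conv_of_real divide_inverse algebra_simps)
  then have "(\<lambda>k. (udiag n U f ^\<^sub>m k) $$ (i,j) / of_nat (fact k))
      sums (\<Sum>l=0..<n. (U $$ (i,l) * cnj (U $$ (j,l))) * exp (f l))"
    by (simp only:) (intro sums_sum sums_mult exp_converges)
  then show "mat_exp (udiag n U f) $$ (i,j) = udiag n U (\<lambda>l. exp (f l)) $$ (i,j)"
    unfolding mat_exp_def using U i j by (simp add: index_udiag sums_iff algebra_simps)
qed (use unitaryD[OF assms] in \<open>auto simp: mat_exp_def\<close>)

lemma udiag_mult_unitary:
  assumes "unitary n U"
  shows "udiag n U f * U = U * mat_diag n f"
proof -
  have "udiag n U f * U = U * mat_diag n f * (adj U * U)"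
    using unitaryD(1)[OF assms] unfolding udiag_def
    by (simp add: assoc_mult_mat[of _ n n _ n _ n])
  then show ?thesis
    using unitaryD[OF assms] by (simp add: right_mult_one_mat[of _ n n])
qed

lemma adj_unitary_mult_udiag:
  assumes "unitary n U"
  shows "adj U * udiag n U f = mat_diag n f * adj U"
proof -
  have "adj U * udiag n U f = (adj U * U) * mat_diag n f * adj U"
    using unitaryD(1)[OF assms] unfolding udiag_def
    by (simp add: assoc_mult_mat[of _ n n _ n _ n])
  then show ?thesis
    using unitaryD[OF assms] by (simp add: left_mult_one_mat[of _ n n])
qed

lemma udiag_mult_col:
  assumes "unitary n U" "j < n"
  shows "udiag n U f *\<^sub>v col U j = f j \<cdot>\<^sub>v col U j"
proof -
  have U: "U \<in> carrier_mat n n"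
    using unitaryD[OF assms(1)] by auto
  have "udiag n U f *\<^sub>v col U j = col (U * mat_diag n f) j"
    using U assms by (metis col_mult2 udiag_carrier(1) udiag_mult_unitary)
  also have "\<dots> = f j \<cdot>\<^sub>v col U j"
  proof (rule eq_vecI)
    fix i assume "i < dim_vec (f j \<cdot>\<^sub>v col U j)"
    then have "i < n"
      using U by simp
    then show "col (U * mat_diag n f) j $ i = (f j \<cdot>\<^sub>v col U j) $ i"
      using U assms(2) index_mult_mat_diag[OF U, of i j f] by (simp add: mult.commute del: index_mult_mat(1))
  qed (use U in simp)
  finally show ?thesis .
qed

lemma udiag_col_eigenvector:
  assumes U: "unitary n U" and j: "j < n"
  shows "eigenvector (udiag n U f) (col U j) (f j)"
  unfolding eigenvector_def using udiag_mult_col[OF U j] unitary_col_nonzero[OF U j]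
    col_carrier_vec[OF j unitaryD(1)[OF U]] unitaryD(1)[OF U] by simp

lemma unitary_conj_udiag:
  assumes "W \<in> carrier_mat n n" "U \<in> carrier_mat n n"
  shows "W * udiag n U f * adj W = udiag n (W * U) f"
proof -
  have "W * udiag n U f * adj W = (W * U) * mat_diag n f * (adj U * adj W)"
    using assms unfolding udiag_def by (simp add: assoc_mult_mat[of _ n n _ n _ n])
  then show ?thesis
    using assms unfolding udiag_def by (simp add: adj_mult[of _ n n _ n])
qed

section \<open>The spectral theorem for Hermitian matrices\<close>

lemma cscalar_prod_self:
  fixes w :: "complex vec"
  shows "w \<bullet>c w = of_real (\<Sum>l=0..<dim_vec w. (cmod (w $ l))\<^sup>2)"
  unfolding scalar_prod_def by (simp add: complex_mult_cnj cmod_def power2_eq_square)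

lemma cscalar_prod_smult:
  fixes w u :: "complex vec"
  assumes "dim_vec w = dim_vec u"
  shows "(a \<cdot>\<^sub>v w) \<bullet>c (b \<cdot>\<^sub>v u) = a * cnj b * (w \<bullet>c u)"
  using assms unfolding scalar_prod_def by (simp add: sum_distrib_left algebra_simps)

lemma unitary_of_corthogonal:
  fixes ws :: "complex vec list"
  assumes ws: "set ws \<subseteq> carrier_vec n" "corthogonal ws" "length ws = n"
  shows "\<exists>W. unitary n W \<and> (\<forall>i<n. \<exists>c. col W i = c \<cdot>\<^sub>v ws ! i)"
proof -
  define r where "r = (\<lambda>w :: complex vec. sqrt (\<Sum>l=0..<n. (cmod (w $ l))\<^sup>2))"
  define W where "W = mat_of_cols n (map (\<lambda>w. complex_of_real (1 / r w) \<cdot>\<^sub>v w) ws)"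
  have wsc: "ws ! i \<in> carrier_vec n" if "i < n" for i
    using ws that by auto
  have self: "ws ! i \<bullet>c ws ! i = of_real ((r (ws ! i))\<^sup>2)" if "i < n" for i
    using cscalar_prod_self[of "ws ! i"] wsc[OF that] unfolding r_def by (simp add: sum_nonneg)
  have r_pos: "r (ws ! i) > 0" if "i < n" for i
  proof -
    have "ws ! i \<bullet>c ws ! i \<noteq> 0"
      using corthogonalD[OF ws(2), of i i] that ws(3) by auto
    then have "(\<Sum>l=0..<n. (cmod (ws ! i $ l))\<^sup>2) \<noteq> 0"
      using self[OF that] unfolding r_def by auto
    moreover have "(\<Sum>l=0..<n. (cmod (ws ! i $ l))\<^sup>2) \<ge> 0"
      by (intro sum_nonneg) auto
    ultimately show ?thesis
      unfolding r_def by simp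
  qed
  have W: "W \<in> carrier_mat n n"
    unfolding W_def using ws by auto
  have col_W: "col W i = complex_of_real (1 / r (ws ! i)) \<cdot>\<^sub>v ws ! i" if "i < n" for i
    unfolding W_def using that ws wsc by simp
  have "(\<Sum>l=0..<n. cnj (W $$ (l,i)) * W $$ (l,j)) = (if i = j then 1 else 0)"
    if i: "i < n" and j: "j < n" for i j
  proof -
    have "(\<Sum>l=0..<n. cnj (W $$ (l,i)) * W $$ (l,j)) = col W j \<bullet>c col W i"
      using i j W by (auto simp: scalar_prod_def mult.commute intro!: sum.cong)
    also have "\<dots> = complex_of_real (1 / r (ws ! j)) * cnj (complex_of_real (1 / r (ws ! i)))
        * (ws ! j \<bullet>c ws ! i)"
      unfolding col_W[OF i] col_W[OF j] using wsc[OF i] wsc[OF j] by (intro cscalar_prod_smult) simp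
    also have "\<dots> = (if i = j then 1 else 0)"
      using corthogonalD[OF ws(2), of j i] i j ws(3) self[OF i] r_pos[OF i]
      by (auto simp: power2_eq_square field_simps)
    finally show ?thesis .
  qed
  then have "unitary n W"
    using W by (intro unitaryI) (auto simp: adj_mult_eq_one_iff)
  then show ?thesis
    using col_W by blast
qed

lemma unitary_with_first_col:
  fixes v :: "complex vec"
  assumes v: "v \<in> carrier_vec n" "v \<noteq> 0\<^sub>v n"
  shows "\<exists>W c. unitary n W \<and> col W 0 = c \<cdot>\<^sub>v v"
proof -
  interpret cof_vec_space n "TYPE(complex)" .
  define b where "b = basis_completion v"
  from basis_completion[OF v, folded b_def]
  have b: "distinct b" "\<not> lin_dep (set b)" "set b \<subseteq> carrier_vec n" "hd b = v" "length b = n"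
    by auto
  have n: "0 < n"
    using v by (cases n) auto
  then obtain vs where bv: "b = v # vs"
    using b(4,5) by (cases b) auto
  define ws where "ws = gram_schmidt n b"
  have ws: "set ws \<subseteq> carrier_vec n" "corthogonal ws" "length ws = n"
    using gram_schmidt_result[OF b(3,1,2) ws_def] b(5) by auto
  have "ws ! 0 = v"
    using gram_schmidt_hd[OF v(1), of vs] n ws(3) unfolding ws_def bv[symmetric]
    by (metis hd_conv_nth length_greater_0_conv)
  then show ?thesis
    using unitary_of_corthogonal[OF ws] n by metis
qed

lemma exists_eigenvector:
  assumes "(A :: complex mat) \<in> carrier_mat n n" "0 < n"
  shows "\<exists>v \<mu>. eigenvector A v \<mu>"
proof -
  obtain as where cp: "char_poly A = (\<Prod>a\<leftarrow>as. [:- a, 1:])" and "length as = n"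
    using char_poly_factorized[OF assms(1)] by auto
  then obtain a rest where "as = a # rest"
    using assms(2) by (cases as) auto
  then have "poly (char_poly A) a = 0"
    unfolding cp by simp
  then show ?thesis
    using eigenvalue_root_char_poly[OF assms(1)] unfolding eigenvalue_def by blast
qed

lemma hermitian_cnj_index:
  "hermitian n A \<Longrightarrow> i < n \<Longrightarrow> j < n \<Longrightarrow> A $$ (i,j) = cnj (A $$ (j,i))"
  unfolding hermitian_def by (metis carrier_matD index_adj)

lemma hermitian_unitary_conj:
  assumes "hermitian n A" "W \<in> carrier_mat n n"
  shows "hermitian n (adj W * A * W)"
proof -
  have A: "A \<in> carrier_mat n n" "adj A = A"
    using assms(1) unfolding hermitian_def by auto
  have "adj (adj W * A * W) = adj W * adj A * W"
    using A assms(2) by (simp add: adj_mult[of _ n n _ n] assoc_mult_mat[of _ n n _ n _ n])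
  then show ?thesis
    using A assms(2) unfolding hermitian_def by simp
qed

lemma hermitian_deflation:
  assumes A: "hermitian (Suc k) A" and W: "unitary (Suc k) W"
    and eigen: "A *\<^sub>v col W 0 = \<mu> \<cdot>\<^sub>v col W 0"
  shows "\<exists>r::real. \<forall>i<Suc k. (adj W * A * W) $$ (i,0) = (if i = 0 then of_real r else 0)
                          \<and> (adj W * A * W) $$ (0,i) = (if i = 0 then of_real r else 0)"
proof -
  define A' where "A' = adj W * A * W"
  have Ac: "A \<in> carrier_mat (Suc k) (Suc k)"
    using A unfolding hermitian_def by auto
  note Wc = unitaryD[OF W]
  have cW: "col W 0 \<in> carrier_vec (Suc k)"
    by (rule col_carrier_vec[OF _ Wc(1)]) simp
  have "col A' 0 = adj W *\<^sub>v (A *\<^sub>v col W 0)"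
    unfolding A'_def using Ac Wc(1) cW
    by (simp add: col_mult2[of _ "Suc k" "Suc k"] assoc_mult_mat_vec[of _ "Suc k" "Suc k"])
  also have "\<dots> = \<mu> \<cdot>\<^sub>v col (adj W * W) 0"
    unfolding eigen using Wc(1) cW by (simp add: mult_mat_vec[of _ "Suc k" "Suc k"] col_mult2[of _ "Suc k" "Suc k"])
  finally have "col A' 0 = \<mu> \<cdot>\<^sub>v unit_vec (Suc k) 0"
    using Wc by simp
  moreover have "A' \<in> carrier_mat (Suc k) (Suc k)"
    unfolding A'_def using Ac Wc by simp
  ultimately have col0: "A' $$ (i,0) = (if i = 0 then \<mu> else 0)" if "i < Suc k" for i
    using that by (metis carrier_matD index_col index_smult_vec(1) index_unit_vec(1,3) mult_cancel_left1
        mult_zero_right zero_less_Suc)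
  have herm: "A' $$ (i,j) = cnj (A' $$ (j,i))" if "i < Suc k" "j < Suc k" for i j
    using hermitian_cnj_index[OF hermitian_unitary_conj[OF A Wc(1)]] that unfolding A'_def by blast
  have "cnj \<mu> = \<mu>"
    using herm[of 0 0] col0[of 0] by simp
  then have mu: "\<mu> = of_real (Re \<mu>)"
    using arg_cong[of "cnj \<mu>" \<mu> Im] by (simp add: complex_eq_iff)
  have row0: "A' $$ (0,i) = (if i = 0 then \<mu> else 0)" if "i < Suc k" for i
    using herm[OF zero_less_Suc that] unfolding col0[OF that] by (simp add: \<open>cnj \<mu> = \<mu>\<close>)
  show ?thesis
    using col0 row0 mu[symmetric] unfolding A'_def by (intro exI[of _ "Re \<mu>"]) auto
qed

definition one_direct_sum :: "nat \<Rightarrow> complex mat \<Rightarrow> complex mat" where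
  "one_direct_sum k U = mat (Suc k) (Suc k)
     (\<lambda>(i,j). if i = 0 \<and> j = 0 then 1 else if i = 0 \<or> j = 0 then 0 else U $$ (i - 1, j - 1))"

lemma one_direct_sum_carrier [simp]: "one_direct_sum k U \<in> carrier_mat (Suc k) (Suc k)"
  unfolding one_direct_sum_def by simp

lemma index_one_direct_sum:
  "j < Suc k \<Longrightarrow> one_direct_sum k U $$ (0,j) = (if j = 0 then 1 else 0)"
  "i < Suc k \<Longrightarrow> one_direct_sum k U $$ (i,0) = (if i = 0 then 1 else 0)"
  "i < k \<Longrightarrow> j < k \<Longrightarrow> one_direct_sum k U $$ (Suc i, Suc j) = U $$ (i,j)"
  unfolding one_direct_sum_def by auto

lemma unitary_one_direct_sum:
  assumes "unitary k U"
  shows "unitary (Suc k) (one_direct_sum k U)"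
proof -
  have "(\<Sum>l=0..<Suc k. cnj (one_direct_sum k U $$ (l,i)) * one_direct_sum k U $$ (l,j))
      = (if i = j then 1 else 0)" if "i < Suc k" "j < Suc k" for i j
    using that unitary_col_inner[OF assms, of "i - 1" "j - 1"]
    unfolding sum.atLeast0_lessThan_Suc_shift comp_def
    by (cases i; cases j) (auto simp: index_one_direct_sum intro!: sum.cong)
  then show ?thesis
    by (intro unitaryI) (auto simp: adj_mult_eq_one_iff)
qed

lemma index_udiag_one_direct_sum:
  assumes U: "U \<in> carrier_mat k k" and ij: "i < Suc k" "j < Suc k"
  shows "udiag (Suc k) (one_direct_sum k U) f $$ (i,j) =
    (if i = 0 \<or> j = 0 then (if i = j then f 0 else 0)
     else udiag k U (\<lambda>l. f (Suc l)) $$ (i - 1, j - 1))"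
  using ij U unfolding index_udiag[OF one_direct_sum_carrier ij] sum.atLeast0_lessThan_Suc_shift comp_def
  by (cases i; cases j) (auto simp: index_udiag index_one_direct_sum intro!: sum.cong)

definition lower_block :: "nat \<Rightarrow> complex mat \<Rightarrow> complex mat" where
  "lower_block k A = mat k k (\<lambda>(i,j). A $$ (Suc i, Suc j))"

lemma hermitian_lower_block:
  assumes "hermitian (Suc k) A"
  shows "hermitian k (lower_block k A)"
  unfolding hermitian_def
proof (intro conjI eq_matI)
  fix i j assume "i < dim_row (lower_block k A)" "j < dim_col (lower_block k A)"
  then show "adj (lower_block k A) $$ (i,j) = lower_block k A $$ (i,j)"
    using hermitian_cnj_index[OF assms, of "Suc i" "Suc j"] by (simp add: lower_block_def)
qed (simp_all add: lower_block_def)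

lemma eq_udiag_one_direct_sumI:
  assumes A: "A \<in> carrier_mat (Suc k) (Suc k)" and U: "U \<in> carrier_mat k k"
    and border: "\<And>i. i < Suc k \<Longrightarrow> A $$ (i,0) = (if i = 0 then c else 0) \<and> A $$ (0,i) = (if i = 0 then c else 0)"
    and block: "lower_block k A = udiag k U f"
  shows "A = udiag (Suc k) (one_direct_sum k U) (\<lambda>j. if j = 0 then c else f (j - 1))"
proof (rule eq_matI)
  fix i j assume "i < dim_row (udiag (Suc k) (one_direct_sum k U) (\<lambda>j. if j = 0 then c else f (j - 1)))"
    "j < dim_col (udiag (Suc k) (one_direct_sum k U) (\<lambda>j. if j = 0 then c else f (j - 1)))"
  then have ij: "i < Suc k" "j < Suc k"
    by simp_all
  have "A $$ (Suc i', Suc j') = udiag k U f $$ (i', j')" if "i' < k" "j' < k" for i' j'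
    using that unfolding block[symmetric] lower_block_def by simp
  then show "A $$ (i,j) = udiag (Suc k) (one_direct_sum k U) (\<lambda>j. if j = 0 then c else f (j - 1)) $$ (i,j)"
    using border ij U by (cases i; cases j) (auto simp: index_udiag_one_direct_sum)
qed (use A in auto)

theorem hermitian_spectral:
  assumes "hermitian n A"
  shows "\<exists>U lam. unitary n U \<and> A = udiag n U (\<lambda>j. complex_of_real (lam j))"
  using assms
proof (induction n arbitrary: A)
  case 0
  have "unitary 0 (1\<^sub>m 0)"
    by (intro unitaryI) auto
  moreover have "A = udiag 0 (1\<^sub>m 0) f" for f
    using "0" unfolding hermitian_def by (intro eq_matI) auto
  ultimately show ?case
    by blast
next
  case (Suc k A)
  have Ac: "A \<in> carrier_mat (Suc k) (Suc k)"
    using Suc.prems unfolding hermitian_def by auto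
  obtain v \<mu> where "eigenvector A v \<mu>"
    using exists_eigenvector[OF Ac] by auto
  then have v: "v \<in> carrier_vec (Suc k)" "v \<noteq> 0\<^sub>v (Suc k)" and Av: "A *\<^sub>v v = \<mu> \<cdot>\<^sub>v v"
    using Ac unfolding eigenvector_def by auto
  obtain W c where W: "unitary (Suc k) W" and Wv: "col W 0 = c \<cdot>\<^sub>v v"
    using unitary_with_first_col[OF v] by auto
  have "A *\<^sub>v col W 0 = \<mu> \<cdot>\<^sub>v col W 0"
    unfolding Wv using mult_mat_vec[OF Ac v(1)] Av by (simp add: smult_smult_assoc mult.commute)
  then obtain r where r: "\<forall>i<Suc k. (adj W * A * W) $$ (i,0) = (if i = 0 then of_real r else 0)
                          \<and> (adj W * A * W) $$ (0,i) = (if i = 0 then of_real r else 0)"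
    using hermitian_deflation[OF Suc.prems W] by blast
  define A' where "A' = adj W * A * W"
  have A': "hermitian (Suc k) A'"
    unfolding A'_def by (rule hermitian_unitary_conj[OF Suc.prems unitaryD(1)[OF W]])
  obtain U' lam' where U': "unitary k U'" and block: "lower_block k A' = udiag k U' (\<lambda>j. of_real (lam' j))"
    using Suc.IH[OF hermitian_lower_block[OF A']] by blast
  define lam where "lam j = (if j = 0 then r else lam' (j - 1))" for j
  have "A' = udiag (Suc k) (one_direct_sum k U') (\<lambda>j. if j = 0 then of_real r else of_real (lam' (j - 1)))"
    using A' r unitaryD(1)[OF U'] unfolding hermitian_def A'_def[symmetric]
    by (intro eq_udiag_one_direct_sumI[OF _ _ _ block]) auto
  also have "\<dots> = udiag (Suc k) (one_direct_sum k U') (\<lambda>j. of_real (lam j))"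
    by (intro udiag_cong) (simp_all add: lam_def)
  moreover have "A = W * A' * adj W"
    unfolding A'_def by (rule unitary_conj_cancel[OF W Ac, symmetric])
  ultimately have "A = udiag (Suc k) (W * one_direct_sum k U') (\<lambda>j. of_real (lam j))"
    using unitaryD(1)[OF W] by (simp add: unitary_conj_udiag)
  then show ?case
    using unitary_mult[OF W unitary_one_direct_sum[OF U']] by blast
qed

section \<open>Trace norm of a unitarily diagonalised matrix\<close>

lemma cscalar_prod_mult_mat_vec:
  assumes "M \<in> carrier_mat n m" "y \<in> carrier_vec m" "v \<in> carrier_vec n"
  shows "(M *\<^sub>v y) \<bullet>c v = y \<bullet>c (adj M *\<^sub>v v)"
proof -
  have "(M *\<^sub>v y) \<bullet>c v = (\<Sum>a=0..<n. \<Sum>b=0..<m. M $$ (a,b) * y $ b * cnj (v $ a))"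
    using assms by (simp add: scalar_prod_def sum_distrib_right)
  also have "\<dots> = (\<Sum>b=0..<m. \<Sum>a=0..<n. M $$ (a,b) * y $ b * cnj (v $ a))"
    by (rule sum.swap)
  also have "\<dots> = y \<bullet>c (adj M *\<^sub>v v)"
    using assms by (simp add: scalar_prod_def sum_distrib_left mult.commute mult.left_commute)
  finally show ?thesis .
qed

lemma udiag_quadratic_form:
  assumes U: "unitary n U" and v: "v \<in> carrier_vec n"
  shows "(udiag n U f *\<^sub>v v) \<bullet>c v = (\<Sum>l=0..<n. f l * (cmod ((adj U *\<^sub>v v) $ l))\<^sup>2)"
proof -
  note Uc = unitaryD(1)[OF U]
  define w where "w = adj U *\<^sub>v v"
  have w: "w \<in> carrier_vec n"
    unfolding w_def using Uc v by (intro mult_mat_vec_carrier[of _ n n]) auto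
  have "udiag n U f *\<^sub>v v = (U * mat_diag n f) *\<^sub>v w"
    unfolding udiag_def w_def using Uc v by (simp add: assoc_mult_mat_vec[of _ n n _ n])
  also have "\<dots> = U *\<^sub>v (mat_diag n f *\<^sub>v w)"
    using Uc w by (simp add: assoc_mult_mat_vec[of _ n n _ n])
  finally have "(udiag n U f *\<^sub>v v) \<bullet>c v = (mat_diag n f *\<^sub>v w) \<bullet>c (adj U *\<^sub>v v)"
    using cscalar_prod_mult_mat_vec[OF Uc _ v, of "mat_diag n f *\<^sub>v w"] w
    by (simp add: mult_mat_vec_carrier[of _ n n])
  then have "(udiag n U f *\<^sub>v v) \<bullet>c v = (mat_diag n f *\<^sub>v w) \<bullet>c w"
    unfolding w_def .
  also have "\<dots> = (\<Sum>l=0..<n. f l * (cmod (w $ l))\<^sup>2)"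
    unfolding scalar_prod_def using w index_mat_diag_mult_vec[OF w]
    by (intro sum.cong) (auto simp: mult.assoc complex_mult_cnj cmod_power2 simp del: index_mult_mat_vec)
  finally show ?thesis
    unfolding w_def .
qed

lemma psd_udiag:
  assumes U: "unitary n U" and t: "\<And>l. l < n \<Longrightarrow> t l \<ge> 0"
  shows "psd n (udiag n U (\<lambda>l. complex_of_real (t l)))"
  unfolding psd_def hermitian_def
proof (intro conjI ballI)
  show "adj (udiag n U (\<lambda>l. complex_of_real (t l))) = udiag n U (\<lambda>l. complex_of_real (t l))"
    using unitaryD(1)[OF U] by (simp add: adj_udiag)
  fix v :: "complex vec" assume "v \<in> carrier_vec n"
  then show "0 \<le> Re ((udiag n U (\<lambda>l. complex_of_real (t l)) *\<^sub>v v) \<bullet>c v)"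
    unfolding udiag_quadratic_form[OF U \<open>v \<in> carrier_vec n\<close>] using t by (auto intro!: sum_nonneg)
qed (use unitaryD(1)[OF U] in simp)

lemma psd_udiag_nonneg:
  assumes U: "unitary n U" and "psd n (udiag n U (\<lambda>l. complex_of_real (t l)))" "i < n"
  shows "t i \<ge> 0"
proof -
  have c: "col U i \<in> carrier_vec n"
    by (rule col_carrier_vec[OF _ unitaryD(1)[OF U]]) fact
  have "col U i \<bullet>c col U i = 1"
    using unitary_col_inner[OF U assms(3,3)] unitaryD(1)[OF U] assms(3)
    by (simp add: scalar_prod_def mult.commute)
  moreover have "0 \<le> Re ((udiag n U (\<lambda>l. complex_of_real (t l)) *\<^sub>v col U i) \<bullet>c col U i)"
    using assms(2) c unfolding psd_def by auto
  moreover have "(complex_of_real (t i) \<cdot>\<^sub>v col U i) \<bullet>c col U i = complex_of_real (t i) * (col U i \<bullet>c col U i)"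
    using c by (simp add: scalar_prod_def sum_distrib_left mult.assoc)
  ultimately show ?thesis
    unfolding udiag_mult_col[OF U assms(3)] by simp
qed

lemma mat_diag_intertwine_sqrt:
  assumes M: "M \<in> carrier_mat n n" and s: "\<And>i. i < n \<Longrightarrow> s i \<ge> 0" and t: "\<And>j. j < n \<Longrightarrow> t j \<ge> 0"
    and sq: "mat_diag n (\<lambda>l. complex_of_real (s l ^ 2)) * M = M * mat_diag n (\<lambda>l. complex_of_real (t l ^ 2))"
  shows "mat_diag n (\<lambda>l. complex_of_real (s l)) * M = M * mat_diag n (\<lambda>l. complex_of_real (t l))"
proof (rule eq_matI)
  fix i j assume "i < dim_row (M * mat_diag n (\<lambda>l. complex_of_real (t l)))"
    "j < dim_col (M * mat_diag n (\<lambda>l. complex_of_real (t l)))"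
  then have ij: "i < n" "j < n"
    using M by auto
  have "complex_of_real (s i ^ 2) * M $$ (i,j) = M $$ (i,j) * complex_of_real (t j ^ 2)"
    using arg_cong[OF sq, of "\<lambda>A. A $$ (i,j)"] M ij
    by (simp add: index_mat_diag_mult index_mult_mat_diag del: index_mult_mat(1) of_real_power)
  then have "M $$ (i,j) = 0 \<or> s i ^ 2 = t j ^ 2"
    by (auto simp del: of_real_power)
  then have "M $$ (i,j) = 0 \<or> s i = t j"
    using s[OF ij(1)] t[OF ij(2)] power2_eq_iff_nonneg by blast
  then show "(mat_diag n (\<lambda>l. complex_of_real (s l)) * M) $$ (i,j)
      = (M * mat_diag n (\<lambda>l. complex_of_real (t l))) $$ (i,j)"
    using M ij by (auto simp: index_mat_diag_mult index_mult_mat_diag simp del: index_mult_mat(1))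
qed (use M in auto)

lemma unitary_mult_right_cancel:
  assumes "unitary n U" "A \<in> carrier_mat n n" "B \<in> carrier_mat n n" "A * U = B * U"
  shows "A = B"
proof -
  have "A * U * adj U = B * U * adj U"
    using assms(4) by simp
  then show ?thesis
    using assms(2,3) unitaryD[OF assms(1)]
    by (simp add: assoc_mult_mat[of _ n n _ n _ n] right_mult_one_mat[of _ n n])
qed

lemma psd_sqrt_udiag_unique:
  assumes U: "unitary n U" and S: "psd n S" and t: "\<And>l. l < n \<Longrightarrow> t l \<ge> 0"
    and SS: "S * S = udiag n U (\<lambda>l. complex_of_real (t l ^ 2))"
  shows "S = udiag n U (\<lambda>l. complex_of_real (t l))"
proof -
  obtain V s where V: "unitary n V" and Seq: "S = udiag n V (\<lambda>l. complex_of_real (s l))"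
    using hermitian_spectral[of n S] S unfolding psd_def by blast
  have s: "s l \<ge> 0" if "l < n" for l
    using psd_udiag_nonneg[OF V _ that] S unfolding Seq by simp
  note Uc = unitaryD[OF U] and Vc = unitaryD[OF V]
  text \<open>M intertwines diag (s^2) and diag (t^2), hence also diag s and diag t.\<close>
  define M where "M = adj V * U"
  have Mc: "M \<in> carrier_mat n n"
    unfolding M_def using Uc Vc by simp
  have "mat_diag n (\<lambda>l. complex_of_real (s l ^ 2)) * M = adj V * (S * S) * U"
    unfolding M_def Seq udiag_mult[OF V] using Uc Vc
    by (simp add: adj_unitary_mult_udiag[OF V] assoc_mult_mat[of _ n n _ n _ n] power2_eq_square)
  also have "\<dots> = M * mat_diag n (\<lambda>l. complex_of_real (t l ^ 2))"
    unfolding M_def SS using Uc Vc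
    by (simp add: assoc_mult_mat[of _ n n _ n _ n] udiag_mult_unitary[OF U])
  finally have sq: "mat_diag n (\<lambda>l. complex_of_real (s l ^ 2)) * M
      = M * mat_diag n (\<lambda>l. complex_of_real (t l ^ 2))" .
  have key: "mat_diag n (\<lambda>l. complex_of_real (s l)) * M = M * mat_diag n (\<lambda>l. complex_of_real (t l))"
    by (rule mat_diag_intertwine_sqrt[OF Mc]) (use s t sq in auto)
  have "S * U = V * (mat_diag n (\<lambda>l. complex_of_real (s l)) * M)"
    unfolding Seq udiag_def M_def using Uc Vc by (simp add: assoc_mult_mat[of _ n n _ n _ n])
  also have "\<dots> = U * mat_diag n (\<lambda>l. complex_of_real (t l))"
    unfolding key using Uc Vc by (simp add: M_def assoc_mult_mat[of _ n n _ n _ n] unitary_mult_adj_cancel[OF V, where m = n])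
  also have "\<dots> = udiag n U (\<lambda>l. complex_of_real (t l)) * U"
    by (rule udiag_mult_unitary[OF U, symmetric])
  finally have SU: "S * U = udiag n U (\<lambda>l. complex_of_real (t l)) * U" .
  have "S \<in> carrier_mat n n"
    using S unfolding psd_def hermitian_def by blast
  then show ?thesis
    using unitary_mult_right_cancel[OF U _ udiag_carrier(1)[OF Uc(1)] SU] by blast
qed

lemma trace_norm_udiag:
  assumes U: "unitary n U"
  shows "trace_norm (udiag n U (\<lambda>l. complex_of_real (x l))) = (\<Sum>l=0..<n. \<bar>x l\<bar>)"
proof -
  note Uc = unitaryD(1)[OF U]
  define X where "X = udiag n U (\<lambda>l. complex_of_real (x l))"
  define T where "T = udiag n U (\<lambda>l. complex_of_real \<bar>x l\<bar>)"
  have XX: "adj X * X = udiag n U (\<lambda>l. complex_of_real (\<bar>x l\<bar> ^ 2))"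
    unfolding X_def adj_udiag[OF Uc] udiag_mult[OF U] using Uc
    by (intro udiag_cong) (simp_all flip: of_real_mult add: power2_eq_square)
  have "psd n T \<and> T * T = adj X * X"
    unfolding T_def XX udiag_mult[OF U] using psd_udiag[OF U] Uc
    by (auto intro!: udiag_cong simp flip: of_real_mult simp: power2_eq_square)
  moreover have "S = T" if "psd n S \<and> S * S = adj X * X" for S
    unfolding T_def using psd_sqrt_udiag_unique[OF U, of S "\<lambda>l. \<bar>x l\<bar>"] that XX by auto
  moreover have "dim_col X = n"
    unfolding X_def using Uc by simp
  ultimately have "mat_abs X = T"
    unfolding mat_abs_def by (metis (mono_tags, lifting) the_equality)
  then show ?thesis
    unfolding X_def trace_norm_def by (simp add: T_def tr_udiag[OF U])
qed

section \<open>Spectral projections\<close>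

lemma idempotent_absorb:
  assumes P: "P \<in> carrier_mat n n" "P * P = P" and Q: "Q \<in> carrier_mat n n"
    and fixed: "\<And>v. v \<in> carrier_vec n \<Longrightarrow> P *\<^sub>v v = v \<Longrightarrow> Q *\<^sub>v v = v"
  shows "Q * P = P"
proof (rule mat_col_eqI)
  fix j assume "j < dim_col P"
  then have j: "j < n"
    using P by simp
  have c: "col P j \<in> carrier_vec n"
    by (rule col_carrier_vec[OF j P(1)])
  have "P *\<^sub>v col P j = col P j"
    using P j by (metis carrier_matD(2) col_mult2)
  then show "col (Q * P) j = col P j"
    using fixed[OF c] col_mult2[OF Q P(1) j] by simp
qed (use P Q in auto)

lemma orth_proj_unique:
  assumes P: "hermitian n P" "P * P = P" and Q: "hermitian n Q" "Q * Q = Q"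
    and same_fixed: "\<And>v. v \<in> carrier_vec n \<Longrightarrow> P *\<^sub>v v = v \<longleftrightarrow> Q *\<^sub>v v = v"
  shows "P = Q"
proof -
  have Pc: "P \<in> carrier_mat n n" "adj P = P" and Qc: "Q \<in> carrier_mat n n" "adj Q = Q"
    using P Q unfolding hermitian_def by auto
  have "Q * P = P" "P * Q = Q"
    using idempotent_absorb[OF Pc(1) P(2) Qc(1)] idempotent_absorb[OF Qc(1) Q(2) Pc(1)] same_fixed by auto
  then have "P = adj P * adj Q"
    using Pc Qc by (metis adj_mult)
  then show ?thesis
    using Pc Qc \<open>P * Q = Q\<close> by simp
qed

lemma orth_proj_eqI:
  assumes "hermitian n P" "P * P = P" "\<And>v. v \<in> carrier_vec n \<Longrightarrow> P *\<^sub>v v = v \<longleftrightarrow> v \<in> W"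
  shows "orth_proj n W = P"
  unfolding orth_proj_def
proof (rule the_equality)
  fix Q assume "hermitian n Q \<and> Q * Q = Q \<and> (\<forall>v\<in>carrier_vec n. Q *\<^sub>v v = v \<longleftrightarrow> v \<in> W)"
  then show "Q = P"
    using orth_proj_unique[of n Q P] assms by auto
qed (use assms in auto)

lemma lincomb_fixed:
  fixes P :: "complex mat"
  assumes Pc: "P \<in> carrier_mat n n"
    and E: "\<And>x. x \<in> E \<Longrightarrow> x \<in> carrier_vec n \<and> P *\<^sub>v x = x" and xs: "set xs \<subseteq> E"
  shows "foldr (+) (map2 (\<lambda>c x. c \<cdot>\<^sub>v x) cs xs) (0\<^sub>v n) \<in> carrier_vec n
       \<and> P *\<^sub>v foldr (+) (map2 (\<lambda>c x. c \<cdot>\<^sub>v x) cs xs) (0\<^sub>v n) = foldr (+) (map2 (\<lambda>c x. c \<cdot>\<^sub>v x) cs xs) (0\<^sub>v n)"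
  using xs
proof (induction xs arbitrary: cs)
  case Nil
  then show ?case
    using Pc by (auto intro!: eq_vecI simp: scalar_prod_def)
next
  case (Cons x xs)
  show ?case
  proof (cases cs)
    case Nil
    then show ?thesis
      using Pc by (auto intro!: eq_vecI simp: scalar_prod_def)
  next
    case (Cons a cs')
    then show ?thesis
      using Cons.IH[of cs'] Cons.prems E[of x] Pc
      by (auto simp: mult_add_distrib_mat_vec[OF Pc] mult_mat_vec[OF Pc])
  qed
qed

lemma vspan_fixed:
  fixes P :: "complex mat"
  assumes "P \<in> carrier_mat n n" "\<And>x. x \<in> E \<Longrightarrow> x \<in> carrier_vec n \<and> P *\<^sub>v x = x" "v \<in> vspan n E"
  shows "P *\<^sub>v v = v"
  using assms lincomb_fixed[OF assms(1,2)] unfolding vspan_def by blast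

lemma foldr_lincomb:
  assumes "\<And>j. j \<in> set js \<Longrightarrow> g j \<in> carrier_vec n"
  shows "foldr (+) (map2 (\<lambda>c x. c \<cdot>\<^sub>v x) (map f js) (map g js)) (0\<^sub>v n)
       = vec n (\<lambda>a. \<Sum>j\<leftarrow>js. f j * g j $ a)"
  using assms
proof (induction js)
  case (Cons j js)
  have "foldr (+) (map2 (\<lambda>c x. c \<cdot>\<^sub>v x) (map f js) (map g js)) (0\<^sub>v n)
      = vec n (\<lambda>a. \<Sum>j\<leftarrow>js. f j * g j $ a)"
    using Cons by simp
  moreover have "dim_vec (g j) = n"
    using Cons.prems by (simp add: carrier_vecD)
  ultimately show ?case
    by (auto intro!: eq_vecI)
qed (auto intro!: eq_vecI)

lemma mem_vspan_of_coords:
  assumes U: "unitary n U" and v: "v \<in> carrier_vec n"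
    and zero: "\<And>j. j < n \<Longrightarrow> \<not> J j \<Longrightarrow> (adj U *\<^sub>v v) $ j = 0"
    and cols: "\<And>j. j < n \<Longrightarrow> J j \<Longrightarrow> col U j \<in> E"
  shows "v \<in> vspan n E"
proof -
  note Uc = unitaryD[OF U]
  define w where "w = adj U *\<^sub>v v"
  have w: "w \<in> carrier_vec n"
    unfolding w_def using Uc v by (intro mult_mat_vec_carrier[of _ n n]) auto
  define js where "js = filter J [0..<n]"
  have "foldr (+) (map2 (\<lambda>c x. c \<cdot>\<^sub>v x) (map (\<lambda>j. w $ j) js) (map (col U) js)) (0\<^sub>v n)
      = vec n (\<lambda>a. \<Sum>j\<leftarrow>js. w $ j * col U j $ a)"
    using Uc by (intro foldr_lincomb) (auto simp: js_def intro: col_carrier_vec[OF _ Uc(1)])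
  also have "\<dots> = U *\<^sub>v w"
  proof (rule eq_vecI)
    fix a assume "a < dim_vec (U *\<^sub>v w)"
    then have a: "a < n"
      using Uc by simp
    have "(\<Sum>j\<leftarrow>js. w $ j * col U j $ a) = (\<Sum>j\<in>{j\<in>{0..<n}. J j}. w $ j * col U j $ a)"
      unfolding js_def by (simp add: sum_list_distinct_conv_sum_set)
    also have "\<dots> = (\<Sum>j=0..<n. if J j then w $ j * col U j $ a else 0)"
      by (rule sum.inter_filter) simp
    also have "\<dots> = (\<Sum>j=0..<n. U $$ (a,j) * w $ j)"
      using zero a Uc unfolding w_def by (intro sum.cong) auto
    finally show "vec n (\<lambda>a. \<Sum>j\<leftarrow>js. w $ j * col U j $ a) $ a = (U *\<^sub>v w) $ a"
      using Uc w a by (simp add: scalar_prod_def)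
  qed (use Uc in auto)
  also have "U *\<^sub>v w = v"
    unfolding w_def using Uc v by (simp flip: assoc_mult_mat_vec[of U n n "adj U" n])
  finally have "v = foldr (+) (map2 (\<lambda>c x. c \<cdot>\<^sub>v x) (map (\<lambda>j. w $ j) js) (map (col U) js)) (0\<^sub>v n)"
    by simp
  moreover have "set (map (col U) js) \<subseteq> E"
    using cols by (auto simp: js_def)
  ultimately show ?thesis
    unfolding vspan_def mem_Collect_eq
    by (intro exI[of _ "map (col U) js"] exI[of _ "map (\<lambda>j. w $ j) js"]) simp
qed

lemma unitary_mult_vec_inj:
  assumes "unitary n U" "x \<in> carrier_vec n" "y \<in> carrier_vec n" "U *\<^sub>v x = U *\<^sub>v y"
  shows "x = y"
  using arg_cong[OF assms(4), of "\<lambda>z. adj U *\<^sub>v z"] assms(2,3) unitaryD[OF assms(1)]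
  by (simp flip: assoc_mult_mat_vec[of "adj U" n n U n])

lemma udiag_mult_vec:
  assumes "unitary n U" "v \<in> carrier_vec n"
  shows "udiag n U g *\<^sub>v v = U *\<^sub>v (mat_diag n g *\<^sub>v (adj U *\<^sub>v v))"
  using assms unitaryD[OF assms(1)] unfolding udiag_def
  by (simp add: assoc_mult_mat_vec[of _ n n _ n] mult_mat_vec_carrier[of _ n n])

lemma udiag_fixes_iff:
  assumes U: "unitary n U" and v: "v \<in> carrier_vec n"
  shows "udiag n U g *\<^sub>v v = v \<longleftrightarrow> (\<forall>j<n. g j * (adj U *\<^sub>v v) $ j = (adj U *\<^sub>v v) $ j)"
proof -
  note Uc = unitaryD[OF U]
  define w where "w = adj U *\<^sub>v v"
  have w: "w \<in> carrier_vec n" and dw: "mat_diag n g *\<^sub>v w \<in> carrier_vec n"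
    unfolding w_def using Uc v by (auto intro!: mult_mat_vec_carrier[of _ n n])
  have "v = U *\<^sub>v w"
    unfolding w_def using Uc v by (simp flip: assoc_mult_mat_vec[of U n n "adj U" n])
  then have "udiag n U g *\<^sub>v v = v \<longleftrightarrow> mat_diag n g *\<^sub>v w = w"
    using udiag_mult_vec[OF U v] unitary_mult_vec_inj[OF U dw w] unfolding w_def by metis
  also have "\<dots> \<longleftrightarrow> (\<forall>j<n. g j * w $ j = w $ j)"
  proof
    assume "mat_diag n g *\<^sub>v w = w"
    then show "\<forall>j<n. g j * w $ j = w $ j"
      using index_mat_diag_mult_vec[OF w] by metis
  next
    assume "\<forall>j<n. g j * w $ j = w $ j"
    then show "mat_diag n g *\<^sub>v w = w"
      using index_mat_diag_mult_vec[OF w] w by (intro eq_vecI) (auto simp del: index_mult_mat_vec)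
  qed
  finally show ?thesis
    unfolding w_def .
qed

lemma udiag_eigenvector_coords:
  assumes U: "unitary n U" and e: "e \<in> carrier_vec n"
    and eigen: "udiag n U lam *\<^sub>v e = x \<cdot>\<^sub>v e" and j: "j < n"
  shows "lam j * (adj U *\<^sub>v e) $ j = x * (adj U *\<^sub>v e) $ j"
proof -
  note Uc = unitaryD[OF U]
  define w where "w = adj U *\<^sub>v e"
  have w: "w \<in> carrier_vec n"
    unfolding w_def using Uc e by (intro mult_mat_vec_carrier[of _ n n]) auto
  have "mat_diag n lam *\<^sub>v w = adj U *\<^sub>v (udiag n U lam *\<^sub>v e)"
    unfolding udiag_mult_vec[OF U e] w_def using Uc e
    by (simp add: unitary_mult_adj_cancel mult_mat_vec_carrier[of _ n n] flip: assoc_mult_mat_vec[of "adj U" n n U n])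
  also have "\<dots> = x \<cdot>\<^sub>v w"
    unfolding eigen w_def using Uc e by (simp add: mult_mat_vec[of _ n n])
  finally have "(mat_diag n lam *\<^sub>v w) $ j = (x \<cdot>\<^sub>v w) $ j"
    by simp
  then have "lam j * w $ j = x * w $ j"
    using index_mat_diag_mult_vec[OF w j] w j by (simp del: index_mult_mat_vec)
  then show ?thesis
    by (simp add: w_def)
qed

lemma udiag_indicator_fixes_eigenvector:
  fixes lam :: "nat \<Rightarrow> real"
  assumes U: "unitary d U" and y: "y \<in> I"
    and eigen: "eigenvector (udiag d U (\<lambda>j. complex_of_real (lam j))) x (complex_of_real y)"
  shows "udiag d U (\<lambda>j. if lam j \<in> I then 1 else 0) *\<^sub>v x = x"
proof -
  have x: "x \<in> carrier_vec d" and Hx: "udiag d U (\<lambda>j. complex_of_real (lam j)) *\<^sub>v x = complex_of_real y \<cdot>\<^sub>v x"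
    using eigen unitaryD(1)[OF U] unfolding eigenvector_def by auto
  have "(if lam j \<in> I then 1 else 0) * (adj U *\<^sub>v x) $ j = (adj U *\<^sub>v x) $ j" if "j < d" for j
  proof (cases "lam j \<in> I")
    case False
    then have "lam j \<noteq> y"
      using y by auto
    then show ?thesis
      using udiag_eigenvector_coords[OF U x Hx that] by simp
  qed simp
  then show ?thesis
    using udiag_fixes_iff[OF U x] by blast
qed

lemma udiag_indicator_fixes_iff:
  fixes lam :: "nat \<Rightarrow> real" and I :: "real set"
  assumes U: "unitary d U" and v: "v \<in> carrier_vec d"
  defines "E \<equiv> {x. \<exists>y\<in>I. eigenvector (udiag d U (\<lambda>j. complex_of_real (lam j))) x (complex_of_real y)}"
  shows "udiag d U (\<lambda>j. if lam j \<in> I then 1 else 0) *\<^sub>v v = v \<longleftrightarrow> v \<in> vspan d E"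
proof
  assume fixed: "udiag d U (\<lambda>j. if lam j \<in> I then 1 else 0) *\<^sub>v v = v"
  have "(adj U *\<^sub>v v) $ j = 0" if "j < d" "\<not> lam j \<in> I" for j
    using iffD1[OF udiag_fixes_iff[OF U v] fixed] that by auto
  moreover have "col U j \<in> E" if "j < d" "lam j \<in> I" for j
    using udiag_col_eigenvector[OF U that(1)] that(2) unfolding E_def by blast
  ultimately show "v \<in> vspan d E"
    by (rule mem_vspan_of_coords[OF U v])
next
  have "x \<in> carrier_vec d \<and> udiag d U (\<lambda>j. if lam j \<in> I then 1 else 0) *\<^sub>v x = x" if xE: "x \<in> E" for x
  proof -
    obtain y where "y \<in> I" and eigen: "eigenvector (udiag d U (\<lambda>j. complex_of_real (lam j))) x (complex_of_real y)"
      using xE unfolding E_def by blast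
    moreover have "x \<in> carrier_vec d"
      using eigen unitaryD(1)[OF U] unfolding eigenvector_def by simp
    ultimately show ?thesis
      using udiag_indicator_fixes_eigenvector[OF U] by blast
  qed
  moreover assume "v \<in> vspan d E"
  ultimately show "udiag d U (\<lambda>j. if lam j \<in> I then 1 else 0) *\<^sub>v v = v"
    by (intro vspan_fixed[OF udiag_carrier(1)[OF unitaryD(1)[OF U]]])
qed

lemma cov_proj_udiag:
  assumes U: "unitary d U" and H: "H = udiag d U (\<lambda>j. complex_of_real (lam j))"
  shows "cov_proj d H \<epsilon> c = udiag d U (\<lambda>j. if lam j \<in> {c - \<epsilon> <..< c + \<epsilon>} then 1 else 0)"
proof -
  note Uc = unitaryD[OF U]
  define P where "P = udiag d U (\<lambda>j. if lam j \<in> {c - \<epsilon> <..< c + \<epsilon>} then 1 else 0)"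
  have "hermitian d P"
    unfolding P_def hermitian_def adj_udiag[OF Uc(1)] using Uc by (auto intro!: udiag_cong)
  moreover have "P * P = P"
    unfolding P_def udiag_mult[OF U] using Uc by (intro udiag_cong) auto
  ultimately show ?thesis
    unfolding cov_proj_def H P_def[symmetric]
    by (rule orth_proj_eqI) (unfold P_def, erule udiag_indicator_fixes_iff[OF U])
qed

section \<open>Distance of normalised weight vectors\<close>

lemma tanh_le_self:
  fixes x :: real
  assumes "0 \<le> x"
  shows "tanh x \<le> x"
proof -
  have "0 - tanh 0 \<le> x - tanh x"
  proof (rule DERIV_nonneg_imp_nondecreasing[OF assms])
    fix y :: real
    have "((\<lambda>y. y - tanh y) has_real_derivative 1 - (1 - tanh y ^ 2)) (at y)"
      by (intro derivative_eq_intros) auto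
    then show "\<exists>D. ((\<lambda>y. y - tanh y) has_real_derivative D) (at y) \<and> 0 \<le> D"
      by fastforce
  qed
  then show ?thesis
    by simp
qed

lemma tanh_le_sqrt:
  fixes x :: real
  assumes "0 \<le> x"
  shows "tanh x \<le> sqrt x"
proof (cases "x \<le> 1")
  case True
  then have "sqrt x * sqrt x \<le> sqrt x * 1"
    using assms by (intro mult_left_mono) auto
  then have "x \<le> sqrt x"
    using assms by simp
  then show ?thesis
    using tanh_le_self[OF assms] by linarith
next
  case False
  then have "1 \<le> sqrt x"
    by simp
  then show ?thesis
    using tanh_real_lt_1[of x] by linarith
qed

lemma exp_double_ratio_eq_tanh:
  fixes x :: real
  shows "(exp (2 * x) - 1) / (exp (2 * x) + 1) = tanh x"
proof -
  define E where "E = exp (2 * x)"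
  have E: "E > 0" and EF: "exp (- 2 * x) = 1 / E"
    unfolding E_def by (simp_all add: exp_minus field_simps)
  have "1 - 1 / E = (E - 1) / E" "1 + 1 / E = (E + 1) / E"
    using E by (simp_all add: diff_divide_distrib add_divide_distrib)
  then have "(E - 1) / (E + 1) = (1 - 1 / E) / (1 + 1 / E)"
    using E by simp
  then show ?thesis
    unfolding tanh_real_altdef EF E_def .
qed

lemma sum_abs_diff_le_of_ratio_bound:
  fixes p q :: "nat \<Rightarrow> real"
  assumes R: "R \<ge> 1" and p: "\<And>j. j < n \<Longrightarrow> p j \<ge> 0"
    and qp: "\<And>j. j < n \<Longrightarrow> q j \<le> R * p j" and pq: "\<And>j. j < n \<Longrightarrow> p j \<le> R * q j"
    and sum_p: "(\<Sum>j<n. p j) = 1" and sum_q: "(\<Sum>j<n. q j) = 1"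
  shows "(\<Sum>j<n. \<bar>q j - p j\<bar>) \<le> 2 * ((R - 1) / (R + 1))"
proof -
  text \<open>
    Both parts of the l1 distance, over S where q exceeds p and over the rest T, equal X; the
    two ratio bounds give X <= (R - 1) Y and R X <= (R - 1) (1 - Y) with Y the p-mass of S.
  \<close>
  define S where "S = {j. j < n \<and> q j > p j}"
  define T where "T = {j. j < n \<and> \<not> q j > p j}"
  have split: "(\<Sum>j<n. f j) = (\<Sum>j\<in>S. f j) + (\<Sum>j\<in>T. f j)" for f :: "nat \<Rightarrow> real"
  proof -
    have "{..<n} = S \<union> T" "S \<inter> T = {}"
      unfolding S_def T_def by auto
    then show ?thesis
      by (simp add: sum.union_disjoint S_def T_def)
  qed
  define X where "X = (\<Sum>j\<in>S. q j - p j)"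
  define Y where "Y = (\<Sum>j\<in>S. p j)"
  have XT: "(\<Sum>j\<in>T. p j - q j) = X"
    using split[of "\<lambda>j. q j - p j"] sum_p sum_q unfolding X_def
    by (simp add: sum_subtractf split[of p] split[of q])
  have "(\<Sum>j<n. \<bar>q j - p j\<bar>) = X + (\<Sum>j\<in>T. p j - q j)"
    unfolding split[of "\<lambda>j. \<bar>q j - p j\<bar>"] X_def by (intro arg_cong2[where f = "(+)"] sum.cong) (auto simp: S_def T_def)
  then have total: "(\<Sum>j<n. \<bar>q j - p j\<bar>) = 2 * X"
    using XT by simp
  have "X \<le> (R - 1) * Y"
    unfolding X_def Y_def sum_distrib_left using qp by (intro sum_mono) (auto simp: S_def algebra_simps)
  moreover have "R * X \<le> (R - 1) * (1 - Y)"
  proof -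
    have "R * X = (\<Sum>j\<in>T. R * p j - R * q j)"
      unfolding XT[symmetric] sum_distrib_left by (simp add: algebra_simps)
    also have "\<dots> \<le> (\<Sum>j\<in>T. (R - 1) * p j)"
      using pq by (intro sum_mono) (auto simp: T_def algebra_simps)
    also have "\<dots> = (R - 1) * (1 - Y)"
      using sum_p unfolding split[of p] Y_def by (simp flip: sum_distrib_left)
    finally show ?thesis .
  qed
  ultimately have "X * (R + 1) \<le> R - 1"
    by (simp add: algebra_simps)
  then show ?thesis
    unfolding total using R by (simp add: le_divide_eq)
qed

lemma sum_abs_diff_normalized_le:
  fixes a b :: "nat \<Rightarrow> real"
  assumes n: "0 < n" and \<delta>: "0 \<le> \<delta>" and a: "\<And>j. j < n \<Longrightarrow> a j > 0" and b: "\<And>j. j < n \<Longrightarrow> b j > 0"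
    and ba: "\<And>j. j < n \<Longrightarrow> b j \<le> exp \<delta> * a j" and ab: "\<And>j. j < n \<Longrightarrow> a j \<le> exp \<delta> * b j"
  shows "(\<Sum>j<n. \<bar>b j / (\<Sum>i<n. b i) - a j / (\<Sum>i<n. a i)\<bar>) \<le> sqrt (4 * \<delta>)"
proof -
  define A where "A = (\<Sum>i<n. a i)"
  define B where "B = (\<Sum>i<n. b i)"
  have A: "A > 0" and B: "B > 0"
    unfolding A_def B_def using a b n by (auto intro!: sum_pos)
  have BA: "B \<le> exp \<delta> * A" and AB: "A \<le> exp \<delta> * B"
    unfolding A_def B_def sum_distrib_left using ab ba by (auto intro!: sum_mono)
  define R where "R = exp (2 * \<delta>)"
  have R: "R = exp \<delta> * exp \<delta>"
    unfolding R_def by (simp flip: exp_add)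
  have "(\<Sum>j<n. \<bar>b j / B - a j / A\<bar>) \<le> 2 * ((R - 1) / (R + 1))"
  proof (rule sum_abs_diff_le_of_ratio_bound)
    show "a j / A \<ge> 0" if "j < n" for j
      using a[OF that] A by simp
    show "R \<ge> 1"
      unfolding R_def using \<delta> by simp
    show "b j / B \<le> R * (a j / A)" if j: "j < n" for j
    proof -
      have "b j * A \<le> (exp \<delta> * a j) * (exp \<delta> * B)"
        using ba[OF j] AB A a[OF j] by (intro mult_mono) auto
      then show ?thesis
        using A B unfolding R by (simp add: field_simps)
    qed
    show "a j / A \<le> R * (b j / B)" if j: "j < n" for j
    proof -
      have "a j * B \<le> (exp \<delta> * b j) * (exp \<delta> * A)"
        using ab[OF j] BA B b[OF j] by (intro mult_mono) auto
      then show ?thesis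
        using A B unfolding R by (simp add: field_simps)
    qed
  qed (use a A B in \<open>auto simp: A_def B_def simp flip: sum_divide_distrib\<close>)
  also have "\<dots> \<le> 2 * sqrt \<delta>"
    using tanh_le_sqrt[OF \<delta>] unfolding R_def exp_double_ratio_eq_tanh by simp
  also have "\<dots> = sqrt (4 * \<delta>)"
    by (simp add: real_sqrt_mult)
  finally show ?thesis
    unfolding A_def B_def .
qed

section \<open>Outcome distributions of a POVM\<close>

lemma has_sum_finite_sum:
  fixes f :: "'j \<Rightarrow> 'a \<Rightarrow> 'b::topological_comm_monoid_add"
  assumes "finite J" "\<And>j. j \<in> J \<Longrightarrow> (f j has_sum s j) A"
  shows "((\<lambda>k. \<Sum>j\<in>J. f j k) has_sum (\<Sum>j\<in>J. s j)) A"
  using assms by (induction J rule: finite_induct) (auto intro: has_sum_add)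

definition col_quad_form :: "nat \<Rightarrow> complex mat \<Rightarrow> complex mat \<Rightarrow> nat \<Rightarrow> complex" where
  "col_quad_form d U F l = (\<Sum>a=0..<d. \<Sum>b=0..<d. F $$ (a,b) * U $$ (b,l) * cnj (U $$ (a,l)))"

lemma col_quad_form_eq:
  assumes "F \<in> carrier_mat d d" "U \<in> carrier_mat d d" "l < d"
  shows "col_quad_form d U F l = (F *\<^sub>v col U l) \<bullet>c col U l"
  using assms by (auto simp: col_quad_form_def scalar_prod_def sum_distrib_right intro!: sum.cong)

lemma tr_mult_udiag:
  assumes F: "F \<in> carrier_mat d d" and U: "U \<in> carrier_mat d d"
  shows "tr (F * udiag d U f) = (\<Sum>l=0..<d. f l * col_quad_form d U F l)"
proof -
  have "tr (F * udiag d U f) = (\<Sum>a=0..<d. \<Sum>b=0..<d. F $$ (a,b) * udiag d U f $$ (b,a))"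
    unfolding tr_def using F U by (auto simp: scalar_prod_def lessThan_atLeast0 intro!: sum.cong)
  also have "\<dots> = (\<Sum>a=0..<d. \<Sum>b=0..<d. \<Sum>l=0..<d. f l * (F $$ (a,b) * U $$ (b,l) * cnj (U $$ (a,l))))"
    using U by (auto simp: index_udiag sum_distrib_left algebra_simps intro!: sum.cong)
  also have "\<dots> = (\<Sum>l=0..<d. f l * col_quad_form d U F l)"
    unfolding col_quad_form_def sum_distrib_left
    by (subst sum.swap, rule sum.cong[OF refl], subst sum.swap) simp
  finally show ?thesis .
qed

lemma col_quad_form_nonneg:
  assumes F: "psd d F" and U: "U \<in> carrier_mat d d" and l: "l < d"
  shows "col_quad_form d U F l = complex_of_real (Re (col_quad_form d U F l))"
    and "Re (col_quad_form d U F l) \<ge> 0"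
proof -
  have Fh: "hermitian d F"
    using F unfolding psd_def by simp
  then have Fc: "F \<in> carrier_mat d d"
    unfolding hermitian_def by simp
  have Fs: "cnj (F $$ (a,b)) = F $$ (b,a)" if "a < d" "b < d" for a b
    using hermitian_cnj_index[OF Fh that(2,1)] by simp
  have "cnj (col_quad_form d U F l) = (\<Sum>a=0..<d. \<Sum>b=0..<d. F $$ (b,a) * U $$ (a,l) * cnj (U $$ (b,l)))"
    unfolding col_quad_form_def cnj_sum by (intro sum.cong refl) (simp add: Fs mult.commute mult.left_commute)
  also have "\<dots> = col_quad_form d U F l"
    unfolding col_quad_form_def by (rule sum.swap)
  finally have "Im (col_quad_form d U F l) = 0"
    by (metis cnj.simps(2) neg_equal_zero)
  then show "col_quad_form d U F l = complex_of_real (Re (col_quad_form d U F l))"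
    by (simp add: complex_eq_iff)
  show "Re (col_quad_form d U F l) \<ge> 0"
    unfolding col_quad_form_eq[OF Fc U l] using F U l unfolding psd_def by auto
qed

lemma povm_col_quad_form_has_sum:
  assumes P: "povm d I F" and U: "unitary d U" and l: "l < d"
  shows "((\<lambda>k. col_quad_form d U (F k) l) has_sum 1) I"
proof -
  have "((\<lambda>k. col_quad_form d U (F k) l) has_sum
      (\<Sum>a=0..<d. \<Sum>b=0..<d. 1\<^sub>m d $$ (a,b) * U $$ (b,l) * cnj (U $$ (a,l)))) I"
    unfolding col_quad_form_def using P unfolding povm_def
    by (intro has_sum_finite_sum finite_atLeastLessThan has_sum_cmult_left) auto
  also have "(\<Sum>a=0..<d. \<Sum>b=0..<d. 1\<^sub>m d $$ (a,b) * U $$ (b,l) * cnj (U $$ (a,l)))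
      = (\<Sum>a=0..<d. cnj (U $$ (a,l)) * U $$ (a,l))"
  proof (intro sum.cong refl)
    fix a assume "a \<in> {0..<d}"
    then have "(\<Sum>b=0..<d. 1\<^sub>m d $$ (a,b) * U $$ (b,l) * cnj (U $$ (a,l)))
        = (\<Sum>b=0..<d. if b = a then U $$ (a,l) * cnj (U $$ (a,l)) else 0)"
      by (intro sum.cong) auto
    then show "(\<Sum>b=0..<d. 1\<^sub>m d $$ (a,b) * U $$ (b,l) * cnj (U $$ (a,l))) = cnj (U $$ (a,l)) * U $$ (a,l)"
      using \<open>a \<in> {0..<d}\<close> by simp
  qed
  also have "\<dots> = 1"
    using unitary_col_inner[OF U l l] by simp
  finally show ?thesis .
qed

lemma povm_sum_abs_diff_le:
  fixes y z :: "nat \<Rightarrow> real"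
  assumes P: "povm d I F" and U: "unitary d U"
  defines "g \<equiv> \<lambda>k. cmod (tr (F k * udiag d U (\<lambda>l. complex_of_real (y l)))
                        - tr (F k * udiag d U (\<lambda>l. complex_of_real (z l))))"
  shows "g summable_on I" and "(\<Sum>\<^sub>\<infinity>k\<in>I. g k) \<le> (\<Sum>l=0..<d. \<bar>y l - z l\<bar>)"
proof -
  note Uc = unitaryD(1)[OF U]
  define h where "h = (\<lambda>k. \<Sum>l=0..<d. \<bar>y l - z l\<bar> * Re (col_quad_form d U (F k) l))"
  have h: "(h has_sum (\<Sum>l=0..<d. \<bar>y l - z l\<bar> * 1)) I"
    unfolding h_def using povm_col_quad_form_has_sum[OF P U]
    by (intro has_sum_finite_sum finite_atLeastLessThan has_sum_cmult_right has_sum_Re[where a = 1, simplified]) auto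
  have g_le: "g k \<le> h k" if k: "k \<in> I" for k
  proof -
    have psdF: "psd d (F k)"
      using P k unfolding povm_def by auto
    then have Fc: "F k \<in> carrier_mat d d"
      unfolding psd_def hermitian_def by auto
    have "g k = cmod (\<Sum>l=0..<d. complex_of_real (y l - z l) * col_quad_form d U (F k) l)"
      unfolding g_def tr_mult_udiag[OF Fc Uc] by (simp add: algebra_simps sum_subtractf)
    also have "\<dots> \<le> (\<Sum>l=0..<d. cmod (complex_of_real (y l - z l) * col_quad_form d U (F k) l))"
      by (rule norm_sum)
    also have "\<dots> = h k"
      unfolding h_def
    proof (intro sum.cong refl)
      fix l assume "l \<in> {0..<d}"
      then have l: "l < d"
        by simp
      show "cmod (complex_of_real (y l - z l) * col_quad_form d U (F k) l)
          = \<bar>y l - z l\<bar> * Re (col_quad_form d U (F k) l)"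
        by (subst col_quad_form_nonneg(1)[OF psdF Uc l])
          (simp only: norm_mult norm_of_real abs_of_nonneg[OF col_quad_form_nonneg(2)[OF psdF Uc l]])
    qed
    finally show ?thesis .
  qed
  have g0: "g k \<ge> 0" for k
    unfolding g_def by simp
  show g: "g summable_on I"
    using summable_on_comparison_test[OF has_sum_imp_summable[OF h] g_le g0] .
  have "(\<Sum>\<^sub>\<infinity>k\<in>I. g k) \<le> (\<Sum>\<^sub>\<infinity>k\<in>I. h k)"
    by (rule infsum_mono[OF g has_sum_imp_summable[OF h] g_le])
  also have "\<dots> = (\<Sum>l=0..<d. \<bar>y l - z l\<bar>)"
    using h by (simp add: infsumI)
  finally show "(\<Sum>\<^sub>\<infinity>k\<in>I. g k) \<le> (\<Sum>l=0..<d. \<bar>y l - z l\<bar>)" .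
qed

section \<open>Gibbs states of a spectral covering\<close>

definition gibbs_weights :: "real \<Rightarrow> nat \<Rightarrow> (nat \<Rightarrow> real) \<Rightarrow> nat \<Rightarrow> real" where
  "gibbs_weights \<beta> n E l = exp (- \<beta> * E l) / (\<Sum>j<n. exp (- \<beta> * E j))"

lemma gibbs_weights_sum_abs_diff_le:
  assumes \<beta>: "0 \<le> \<beta>" and \<epsilon>: "0 \<le> \<epsilon>" and close: "\<And>j. j < n \<Longrightarrow> \<bar>E j - E' j\<bar> \<le> \<epsilon>"
  shows "(\<Sum>j<n. \<bar>gibbs_weights \<beta> n E' j - gibbs_weights \<beta> n E j\<bar>) \<le> sqrt (4 * \<epsilon> * \<beta>)"
proof (cases "n = 0")
  case False
  have "exp (- \<beta> * E' j) \<le> exp (\<beta> * \<epsilon>) * exp (- \<beta> * E j)"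
    and "exp (- \<beta> * E j) \<le> exp (\<beta> * \<epsilon>) * exp (- \<beta> * E' j)" if "j < n" for j
  proof -
    have "\<beta> * (E j - E' j) \<le> \<beta> * \<epsilon>" "\<beta> * (E' j - E j) \<le> \<beta> * \<epsilon>"
      using close[OF that] \<beta> by (auto intro: mult_left_mono)
    then have "- \<beta> * E' j \<le> \<beta> * \<epsilon> + - \<beta> * E j" "- \<beta> * E j \<le> \<beta> * \<epsilon> + - \<beta> * E' j"
      by (simp_all add: algebra_simps)
    then show "exp (- \<beta> * E' j) \<le> exp (\<beta> * \<epsilon>) * exp (- \<beta> * E j)"
      and "exp (- \<beta> * E j) \<le> exp (\<beta> * \<epsilon>) * exp (- \<beta> * E' j)"
      by (simp_all flip: exp_add)
  qed
  then have "(\<Sum>j<n. \<bar>gibbs_weights \<beta> n E' j - gibbs_weights \<beta> n E j\<bar>) \<le> sqrt (4 * (\<beta> * \<epsilon>))"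
    unfolding gibbs_weights_def using False \<beta> \<epsilon> by (intro sum_abs_diff_normalized_le) auto
  then show ?thesis
    by (simp add: algebra_simps)
qed (use \<beta> \<epsilon> in simp)

lemma gibbs_udiag:
  assumes U: "unitary d U"
  shows "gibbs \<beta> (udiag d U (\<lambda>j. complex_of_real (lam j)))
    = udiag d U (\<lambda>l. complex_of_real (gibbs_weights \<beta> d lam l))"
proof -
  note Uc = unitaryD(1)[OF U]
  have exp_H: "mat_exp (complex_of_real (- \<beta>) \<cdot>\<^sub>m udiag d U (\<lambda>j. complex_of_real (lam j)))
      = udiag d U (\<lambda>l. complex_of_real (exp (- \<beta> * lam l)))"
    unfolding udiag_smult[OF Uc] mat_exp_udiag[OF U] using Uc
    by (intro udiag_cong) (simp_all flip: of_real_mult exp_of_real)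
  then show ?thesis
    unfolding gibbs_def partition_fn_def exp_H
    unfolding tr_udiag[OF U] udiag_smult[OF Uc] gibbs_weights_def using Uc by (intro udiag_cong) (simp_all add: atLeast0LessThan)
qed

lemma covering_index:
  assumes cov: "spectral_covering \<epsilon> H d' e" and U: "unitary d U"
    and H: "H = udiag d U (\<lambda>j. complex_of_real (lam j))"
  obtains \<iota> where "\<And>j. j < d \<Longrightarrow> \<iota> j < d' \<and> lam j \<in> {e (\<iota> j) - \<epsilon> <..< e (\<iota> j) + \<epsilon>}"
    and "\<And>i j. j < d \<Longrightarrow> i < d' \<Longrightarrow> lam j \<in> {e i - \<epsilon> <..< e i + \<epsilon>} \<Longrightarrow> i = \<iota> j"
proof -
  have "\<exists>i<d'. lam j \<in> {e i - \<epsilon> <..< e i + \<epsilon>}" if j: "j < d" for j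
  proof -
    have "eigenvector H (col U j) (complex_of_real (lam j))"
      unfolding H by (rule udiag_col_eigenvector[OF U j])
    then have "complex_of_real (lam j) \<in> spectrum H"
      unfolding spectrum_def eigenvalue_def by blast
    then obtain i where "i < d'" "complex_of_real (lam j) \<in> complex_of_real ` {e i - \<epsilon> <..< e i + \<epsilon>}"
      using cov unfolding spectral_covering_def by blast
    then show ?thesis
      by auto
  qed
  then have "\<forall>j. \<exists>i. j < d \<longrightarrow> i < d' \<and> lam j \<in> {e i - \<epsilon> <..< e i + \<epsilon>}"
    by blast
  then obtain \<iota> where \<iota>: "\<And>j. j < d \<Longrightarrow> \<iota> j < d' \<and> lam j \<in> {e (\<iota> j) - \<epsilon> <..< e (\<iota> j) + \<epsilon>}"
    by metis
  moreover have "i = \<iota> j" if "j < d" "i < d'" "lam j \<in> {e i - \<epsilon> <..< e i + \<epsilon>}" for i j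
    using cov \<iota>[OF that(1)] that unfolding spectral_covering_def by blast
  ultimately show ?thesis
    using that by blast
qed

lemma sum_mult_indicator_single:
  fixes c :: "nat \<Rightarrow> 'a::semiring_1"
  assumes i0: "i0 < m" "x \<in> S i0" and unique: "\<And>i. i < m \<Longrightarrow> x \<in> S i \<Longrightarrow> i = i0"
  shows "(\<Sum>i<m. c i * (if x \<in> S i then 1 else 0)) = c i0"
proof -
  have "c i * (if x \<in> S i then 1 else 0) = (if i = i0 then c i else 0)" if "i < m" for i
    using i0(2) unique[OF that] by (cases "x \<in> S i") auto
  then have "(\<Sum>i<m. c i * (if x \<in> S i then 1 else 0)) = (\<Sum>i<m. if i = i0 then c i else 0)"
    by (intro sum.cong) auto
  then show ?thesis
    using i0(1) by simp
qed

lemma msum_udiag: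
  assumes "U \<in> carrier_mat d d" "finite A"
  shows "msum d (\<lambda>i. udiag d U (f i)) A = udiag d U (\<lambda>l. \<Sum>i\<in>A. f i l)"
proof (rule eq_matI)
  fix a b assume "a < dim_row (udiag d U (\<lambda>l. \<Sum>i\<in>A. f i l))" "b < dim_col (udiag d U (\<lambda>l. \<Sum>i\<in>A. f i l))"
  then have "a < d" "b < d"
    using assms(1) by auto
  then show "msum d (\<lambda>i. udiag d U (f i)) A $$ (a,b) = udiag d U (\<lambda>l. \<Sum>i\<in>A. f i l) $$ (a,b)"
    using assms(1) unfolding msum_def
    by (simp add: index_udiag sum_distrib_left sum_distrib_right sum.swap[of _ A])
qed (use assms in \<open>auto simp: msum_def\<close>)

lemma approx_state_udiag:
  assumes U: "unitary d U" and H: "H = udiag d U (\<lambda>j. complex_of_real (lam j))"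
    and \<iota>: "\<And>j. j < d \<Longrightarrow> \<iota> j < d' \<and> lam j \<in> {e (\<iota> j) - \<epsilon> <..< e (\<iota> j) + \<epsilon>}"
    and \<iota>_unique: "\<And>i j. j < d \<Longrightarrow> i < d' \<Longrightarrow> lam j \<in> {e i - \<epsilon> <..< e i + \<epsilon>} \<Longrightarrow> i = \<iota> j"
  shows "approx_state d H \<beta> \<epsilon> d' e = udiag d U (\<lambda>l. complex_of_real (gibbs_weights \<beta> d (\<lambda>j. e (\<iota> j)) l))"
proof -
  note Uc = unitaryD(1)[OF U]
  define c where "c i = complex_of_real (exp (- \<beta> * e i))" for i
  define chi where "chi = (\<lambda>i l. if lam l \<in> {e i - \<epsilon> <..< e i + \<epsilon>} then 1 else 0 :: complex)"
  have P: "cov_proj d H \<epsilon> (e i) = udiag d U (chi i)" for i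
    unfolding chi_def by (rule cov_proj_udiag[OF U H])
  have collapse: "(\<Sum>i<d'. c i * chi i l) = c (\<iota> l)" if "l < d" for l
    unfolding chi_def using \<iota>[OF that] by (intro sum_mult_indicator_single \<iota>_unique[OF that]) auto
  have "approx_partition_fn d H \<beta> \<epsilon> d' e = (\<Sum>i<d'. \<Sum>l<d. c i * chi i l)"
    unfolding approx_partition_fn_def P tr_udiag[OF U]
    by (simp add: sum_distrib_right atLeast0LessThan mult.commute c_def)
  also have "\<dots> = (\<Sum>l<d. \<Sum>i<d'. c i * chi i l)"
    by (rule sum.swap)
  also have "\<dots> = complex_of_real (\<Sum>l<d. exp (- \<beta> * e (\<iota> l)))"
    using collapse by (simp add: c_def)
  finally have Z: "approx_partition_fn d H \<beta> \<epsilon> d' e = complex_of_real (\<Sum>l<d. exp (- \<beta> * e (\<iota> l)))" .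
  have "msum d (\<lambda>i. c i \<cdot>\<^sub>m cov_proj d H \<epsilon> (e i)) {..<d'} = udiag d U (\<lambda>l. c (\<iota> l))"
    unfolding P udiag_smult[OF Uc] msum_udiag[OF Uc finite_lessThan] using Uc collapse
    by (intro udiag_cong) auto
  then have "approx_state d H \<beta> \<epsilon> d' e
      = (1 / complex_of_real (\<Sum>l<d. exp (- \<beta> * e (\<iota> l)))) \<cdot>\<^sub>m udiag d U (\<lambda>l. c (\<iota> l))"
    unfolding approx_state_def c_def[symmetric] Z by simp
  also have "\<dots> = udiag d U (\<lambda>l. complex_of_real (gibbs_weights \<beta> d (\<lambda>j. e (\<iota> j)) l))"
    unfolding udiag_smult[OF Uc] using Uc by (intro udiag_cong) (simp_all add: c_def gibbs_weights_def)
  finally show ?thesis .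
qed

theorem theorem3p3:
  fixes H :: "complex mat" and d d' :: nat and \<beta> \<epsilon> :: real and e :: "nat \<Rightarrow> real"
  assumes "hermitian d H" and "\<beta> > 0" and "\<epsilon> > 0"
    and "spectral_covering \<epsilon> H d' e"
  shows "trace_norm (approx_state d H \<beta> \<epsilon> d' e - gibbs \<beta> H) \<le> sqrt (4 * \<epsilon> * \<beta>)
       \<and> (\<forall>(I :: 'k set) F. povm d I F \<longrightarrow>
            (let p = (\<lambda>k. tr (F k * gibbs \<beta> H));
                 pt = (\<lambda>k. tr (F k * approx_state d H \<beta> \<epsilon> d' e)) in
              (\<lambda>k. cmod (pt k - p k)) summable_on I \<and>
              (\<Sum>\<^sub>\<infinity>k\<in>I. cmod (pt k - p k)) \<le> sqrt (4 * \<epsilon> * \<beta>)))"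
proof -
  obtain U lam where U: "unitary d U" and H: "H = udiag d U (\<lambda>j. complex_of_real (lam j))"
    using hermitian_spectral[OF assms(1)] by blast
  obtain \<iota> where \<iota>: "\<And>j. j < d \<Longrightarrow> \<iota> j < d' \<and> lam j \<in> {e (\<iota> j) - \<epsilon> <..< e (\<iota> j) + \<epsilon>}"
    and \<iota>_unique: "\<And>i j. j < d \<Longrightarrow> i < d' \<Longrightarrow> lam j \<in> {e i - \<epsilon> <..< e i + \<epsilon>} \<Longrightarrow> i = \<iota> j"
    using covering_index[OF assms(4) U H] by blast
  define p where "p = gibbs_weights \<beta> d lam"
  define q where "q = gibbs_weights \<beta> d (\<lambda>j. e (\<iota> j))"
  have gibbs: "gibbs \<beta> H = udiag d U (\<lambda>l. complex_of_real (p l))"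
    unfolding H p_def by (rule gibbs_udiag[OF U])
  have approx: "approx_state d H \<beta> \<epsilon> d' e = udiag d U (\<lambda>l. complex_of_real (q l))"
    unfolding q_def by (rule approx_state_udiag[OF U H \<iota> \<iota>_unique])
  have "\<bar>lam j - e (\<iota> j)\<bar> \<le> \<epsilon>" if "j < d" for j
    using \<iota>[OF that] by (simp add: abs_le_iff)
  then have tv: "(\<Sum>l=0..<d. \<bar>q l - p l\<bar>) \<le> sqrt (4 * \<epsilon> * \<beta>)"
    unfolding p_def q_def atLeast0LessThan using assms(2,3)
    by (intro gibbs_weights_sum_abs_diff_le) auto
  have diff: "approx_state d H \<beta> \<epsilon> d' e - gibbs \<beta> H = udiag d U (\<lambda>l. complex_of_real (q l - p l))"
    unfolding gibbs approx udiag_minus[OF unitaryD(1)[OF U]] by simp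
  have "trace_norm (approx_state d H \<beta> \<epsilon> d' e - gibbs \<beta> H) \<le> sqrt (4 * \<epsilon> * \<beta>)"
    using tv unfolding diff trace_norm_udiag[OF U] .
  moreover have "(\<lambda>k. cmod (tr (F k * approx_state d H \<beta> \<epsilon> d' e) - tr (F k * gibbs \<beta> H))) summable_on I
      \<and> (\<Sum>\<^sub>\<infinity>k\<in>I. cmod (tr (F k * approx_state d H \<beta> \<epsilon> d' e) - tr (F k * gibbs \<beta> H))) \<le> sqrt (4 * \<epsilon> * \<beta>)"
    if "povm d I F" for I :: "'k set" and F
    using povm_sum_abs_diff_le[OF that U, of q p] tv unfolding gibbs approx by auto
  ultimately show ?thesis
    by (simp add: Let_def)
qed

end
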